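(* Let $\mathfrak g$ be an $n$-dimensional filiform Lie algebra with associated triple $(z_1,n-2,n)$, $z_1<n-2$, with parameters $\alpha_1,\dots,\alpha_{n-z_1-1},\gamma_1,\beta_{k,2}$ with respect to an adapted basis, and let $p=\lfloor(n-z_1-1)/2\rfloor$. Then there exists an adapted basis $\{f_1,\dots,f_n\}$ of $\mathfrak g$ in which the law is: $[f_1,f_h]=f_{h-1}$ ($3\le h\le n$); $[f_{z_1},f_n]=f_2$; $[f_{z_1+i},f_{n-1}]=0$ for $0\le i<p$; $[f_{z_1+i},f_{n-1}]=\frac{\alpha_{p+1}}{\gamma_1}f_{i-p+2}+\frac{\alpha_{p+2}}{\gamma_1}f_{i-p+1}+\dots+\frac{\alpha_{i+1}}{\gamma_1}f_2$ for $p\le i\le n-2-z_1$; $[f_{z_1+k},f_n]=\sum_{h=2}^{k+2}\overline P_h([f_{z_1+k-1},f_n]+[f_{z_1+k},f_{n-1}])f_{h+1}+\frac{\beta_{k,2}}{\gamma_1}f_2$ for $1\le k\le n-z_1-1$, where $\overline P_h$ is the $h$-th coordinate with respect to $\{f_h\}$; all other brackets $[f_a,f_b]$, $2\le a<b\le n$, are zero. (Equivalently, the parameters with respect to $\{f_h\}$ are $\gamma_1^{-1}$ times the original ones, so that the new $\gamma_1$ equals $1$.)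
   Context: All Lie algebras are over $\mathbb C$; $C^1\mathfrak g=\mathfrak g$, $C^k\mathfrak g=[C^{k-1}\mathfrak g,\mathfrak g]$. A Lie algebra is filiform if $\dim\mathfrak g=n\ge2$ and $\dim C^k\mathfrak g=n-k$ for $2\le k\le n$. An adapted basis of a filiform $\mathfrak g$ is a basis $\{e_1,\dots,e_n\}$ with $[e_1,e_h]=e_{h-1}$ ($3\le h\le n$), $[e_2,e_h]=0$ ($1\le h\le n$), $[e_3,e_h]=0$ ($2\le h\le n$). For non-model filiform $\mathfrak g$, $z_1=\min\{k\ge4:[e_k,e_n]\ne0\}$, $z_2=\min\{k\ge4:[e_k,e_{k+1}]\ne0\}$ (in any adapted basis) are invariants; $(z_1,z_2,n)$ is the associated triple. $P_h(u)$ is the $h$-th coordinate of $u$ in the basis $\{e_h\}$. General law when $z_2=n-2$ (known result): there exist complex numbers $\alpha_1,\dots,\alpha_{n-z_1-1}$, $\gamma_1$, $\beta_{k,2}$ ($1\le k<n-z_1$), the parameters, such that $[e_1,e_h]=e_{h-1}$ ($3\le h\le n$); $[e_{z_1+i},e_{n-1}]=\alpha_1e_{i+2}+\dots+\alpha_{i+1}e_2$ ($0\le i\le n-2-z_1$); $[e_{z_1},e_n]=\alpha_1e_3+\gamma_1e_2$; $[e_{z_1+k},e_n]=\sum_{h=2}^{k+2}P_h([e_{z_1+k-1},e_n]+[e_{z_1+k},e_{n-1}])e_{h+1}+\beta_{k,2}e_2$ ($1\le k<n-z_1$); all other brackets $[e_a,e_b]$, $2\le a<b\le n$, are zero. It is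 known (for this triple) that $\alpha_1=\dots=\alpha_p=0$ and $\gamma_1\ne0$. *)

theory Defs
  imports Complex_Main
begin

definition lie_algebra :: "(complex \<Rightarrow> 'v::ab_group_add \<Rightarrow> 'v) \<Rightarrow> ('v \<Rightarrow> 'v \<Rightarrow> 'v) \<Rightarrow> bool" where
  "lie_algebra sc br \<longleftrightarrow>
     vector_space sc \<and>
     (\<forall>x. Vector_Spaces.linear sc sc (br x)) \<and>
     (\<forall>y. Vector_Spaces.linear sc sc (\<lambda>x. br x y)) \<and>
     (\<forall>x. br x x = 0) \<and>
     (\<forall>x y z. br x (br y z) + br y (br z x) + br z (br x y) = 0)"

text \<open>Lower central series: lcs 1 = g, lcs k = [lcs (k-1), g] (span of brackets).
 (lcs 0 is also set to g; it is never used.)\<close>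

fun lcs :: "(complex \<Rightarrow> 'v::ab_group_add \<Rightarrow> 'v) \<Rightarrow> ('v \<Rightarrow> 'v \<Rightarrow> 'v) \<Rightarrow> nat \<Rightarrow> 'v set" where
  "lcs sc br 0 = UNIV"
| "lcs sc br (Suc 0) = UNIV"
| "lcs sc br (Suc (Suc k)) = module.span sc {br x y | x y. x \<in> lcs sc br (Suc k)}"

definition filiform :: "(complex \<Rightarrow> 'v::ab_group_add \<Rightarrow> 'v) \<Rightarrow> ('v \<Rightarrow> 'v \<Rightarrow> 'v) \<Rightarrow> nat \<Rightarrow> bool" where
  "filiform sc br n \<longleftrightarrow> n \<ge> 2 \<and> vector_space.dim sc (UNIV :: 'v set) = n \<and>
     (\<forall>k. 2 \<le> k \<and> k \<le> n \<longrightarrow> vector_space.dim sc (lcs sc br k) = n - k)"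

definition is_basis :: "(complex \<Rightarrow> 'v::ab_group_add \<Rightarrow> 'v) \<Rightarrow> nat \<Rightarrow> (nat \<Rightarrow> 'v) \<Rightarrow> bool" where
  "is_basis sc n e \<longleftrightarrow> inj_on e {1..n} \<and> \<not> module.dependent sc (e ` {1..n}) \<and>
     module.span sc (e ` {1..n}) = UNIV"

definition adapted_basis :: "(complex \<Rightarrow> 'v::ab_group_add \<Rightarrow> 'v) \<Rightarrow> ('v \<Rightarrow> 'v \<Rightarrow> 'v) \<Rightarrow> nat \<Rightarrow> (nat \<Rightarrow> 'v) \<Rightarrow> bool" where
  "adapted_basis sc br n e \<longleftrightarrow> is_basis sc n e \<and>
     (\<forall>h. 3 \<le> h \<and> h \<le> n \<longrightarrow> br (e 1) (e h) = e (h - 1)) \<and>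
     (\<forall>h. 1 \<le> h \<and> h \<le> n \<longrightarrow> br (e 2) (e h) = 0) \<and>
     (\<forall>h. 2 \<le> h \<and> h \<le> n \<longrightarrow> br (e 3) (e h) = 0)"

definition coord :: "(complex \<Rightarrow> 'v::ab_group_add \<Rightarrow> 'v) \<Rightarrow> nat \<Rightarrow> (nat \<Rightarrow> 'v) \<Rightarrow> nat \<Rightarrow> 'v \<Rightarrow> complex" where
  "coord sc n e h u = module.representation sc (e ` {1..n}) u (e h)"

definition has_triple :: "('v::ab_group_add \<Rightarrow> 'v \<Rightarrow> 'v) \<Rightarrow> nat \<Rightarrow> (nat \<Rightarrow> 'v) \<Rightarrow> nat \<Rightarrow> nat \<Rightarrow> bool" where
  "has_triple br n e z1 z2 \<longleftrightarrow>
     4 \<le> z1 \<and> br (e z1) (e n) \<noteq> 0 \<and> (\<forall>k. 4 \<le> k \<and> k < z1 \<longrightarrow> br (e k) (e n) = 0) \<and>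
     4 \<le> z2 \<and> br (e z2) (e (z2 + 1)) \<noteq> 0 \<and> (\<forall>k. 4 \<le> k \<and> k < z2 \<longrightarrow> br (e k) (e (k + 1)) = 0)"

text \<open>The general law for z2 = n - 2 in the basis e with parameters
 alpha_1.., gamma_1, beta_{k,2} (beta k stands for beta_{k,2}).\<close>

definition law_z2 :: "(complex \<Rightarrow> 'v::ab_group_add \<Rightarrow> 'v) \<Rightarrow> ('v \<Rightarrow> 'v \<Rightarrow> 'v) \<Rightarrow> nat \<Rightarrow> (nat \<Rightarrow> 'v) \<Rightarrow> nat
     \<Rightarrow> (nat \<Rightarrow> complex) \<Rightarrow> complex \<Rightarrow> (nat \<Rightarrow> complex) \<Rightarrow> bool" where
  "law_z2 sc br n e z1 \<alpha> \<gamma>1 \<beta> \<longleftrightarrow>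
     (\<forall>h. 3 \<le> h \<and> h \<le> n \<longrightarrow> br (e 1) (e h) = e (h - 1)) \<and>
     (\<forall>i. i \<le> n - 2 - z1 \<longrightarrow>
        br (e (z1 + i)) (e (n - 1)) = (\<Sum>j = 0..i. sc (\<alpha> (j + 1)) (e (i + 2 - j)))) \<and>
     br (e z1) (e n) = sc (\<alpha> 1) (e 3) + sc \<gamma>1 (e 2) \<and>
     (\<forall>k. 1 \<le> k \<and> k < n - z1 \<longrightarrow>
        br (e (z1 + k)) (e n) =
          (\<Sum>h = 2..k + 2. sc (coord sc n e h (br (e (z1 + k - 1)) (e n) + br (e (z1 + k)) (e (n - 1))))
                              (e (h + 1))) + sc (\<beta> k) (e 2)) \<and>
     (\<forall>a b. 2 \<le> a \<and> a < b \<and> b \<le> n \<and>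
        \<not> (b = n - 1 \<and> z1 \<le> a \<and> a \<le> n - 2) \<and> \<not> (b = n \<and> z1 \<le> a \<and> a < n) \<longrightarrow>
        br (e a) (e b) = 0)"

end

theory Submission
  imports Defs
begin

text \<open>Take f_1 = e_1 and f_h = c e_h for h \<ge> 2. Every prescribed bracket [e_a, e_b] with
  2 \<le> a < b is a combination of e_2, ..., e_n, so it is multiplied by c^2 while the vectors
  it is expanded in are multiplied by c: every parameter \<alpha>_j, \<gamma>_1, \<beta>_{k,2} of the law gets
  multiplied by c, and the coordinates P_h, h \<ge> 2, are divided by c, which is compatible
  with the recursive description of [e_{z_1+k}, e_n]. For c = 1/\<gamma>_1 the new \<gamma>_1 is 1, and
  \<alpha>_1 = ... = \<alpha>_p = 0 removes the first p terms of the sums.\<close>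

context vector_space
begin

lemma representation_scale_basis_vector:
  assumes ind: "independent (e ` S)" and inj: "inj_on e S" and a: "a \<in> S" and k: "k \<in> S"
  shows "representation (e ` S) (c *s e a) (e k) = (if k = a then c else 0)"
proof -
  have "representation (e ` S) (c *s e a) = (\<lambda>b. c * representation (e ` S) (e a) b)"
    by (rule representation_scale[OF ind]) (simp add: a span_base)
  also have "\<dots> = (\<lambda>b. c * (if b = e a then 1 else 0))"
    using representation_basis[OF ind] a by simp
  finally show ?thesis using inj a k by (auto simp: inj_on_eq_iff)
qed

lemma representation_sum_basis:
  assumes ind: "independent (e ` S)" and inj: "inj_on e S" and fin: "finite S" and k: "k \<in> S"
  shows "representation (e ` S) (\<Sum>h\<in>S. c h *s e h) (e k) = c k"
proof -
  have "representation (e ` S) (\<Sum>h\<in>S. c h *s e h) =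
      (\<lambda>b. \<Sum>h\<in>S. representation (e ` S) (c h *s e h) b)"
    by (rule representation_sum[OF ind]) (auto intro: span_scale span_base)
  then have "representation (e ` S) (\<Sum>h\<in>S. c h *s e h) (e k) = (\<Sum>h\<in>S. if k = h then c h else 0)"
    using representation_scale_basis_vector[OF ind inj _ k] by simp
  also have "\<dots> = c k" using fin k by simp
  finally show ?thesis .
qed

end

lemma sum_coord_basis:
  assumes vs: "vector_space sc"
    and "is_basis sc n e"
  shows "(\<Sum>h\<in>{1..n}. sc (coord sc n e h u) (e h)) = u"
proof -
  interpret vector_space sc by (rule vs)
  have inj: "inj_on e {1..n}" and ind: "independent (e ` {1..n})" and sp: "span (e ` {1..n}) = UNIV"
    using assms unfolding is_basis_def by auto
  have "(\<Sum>b\<in>e ` {1..n}. sc (representation (e ` {1..n}) u b) b) = u"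
    by (rule sum_representation_eq[OF ind]) (use sp in \<open>auto simp del: One_nat_def\<close>)
  then show ?thesis unfolding sum.reindex[OF inj] comp_def coord_def .
qed

lemma coord_scale:
  assumes vs: "vector_space sc"
    and "is_basis sc n e"
  shows "coord sc n e h (sc c u) = c * coord sc n e h u"
proof -
  interpret vector_space sc by (rule vs)
  show ?thesis
    using assms representation_scale[of "e ` {1..n}" u c] unfolding coord_def is_basis_def by simp
qed

definition rescale_basis :: "(complex \<Rightarrow> 'v \<Rightarrow> 'v) \<Rightarrow> (nat \<Rightarrow> complex) \<Rightarrow> (nat \<Rightarrow> 'v) \<Rightarrow> nat \<Rightarrow> 'v" where
  "rescale_basis sc s e h = sc (s h) (e h)"

lemma is_basis_rescale_basis:
  fixes sc :: "complex \<Rightarrow> 'v::ab_group_add \<Rightarrow> 'v"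
  assumes vs: "vector_space sc"
    and basis: "is_basis sc n e" and s_nz: "\<And>h. s h \<noteq> 0"
  shows "is_basis sc n (rescale_basis sc s e)"
proof -
  interpret vector_space sc by (rule vs)
  let ?E = "e ` {1..n}" and ?f = "rescale_basis sc s e"
  let ?F = "?f ` {1..n}"
  have injE: "inj_on e {1..n}" and indE: "independent ?E" and spE: "span ?E = UNIV"
    using basis unfolding is_basis_def by auto
  have injF: "inj_on ?f {1..n}"
  proof (rule inj_onI)
    fix a b assume a: "a \<in> {1..n}" and b: "b \<in> {1..n}" and "?f a = ?f b"
    then have "representation ?E (sc (s a) (e a)) (e a) = representation ?E (sc (s b) (e b)) (e a)"
      by (simp add: rescale_basis_def)
    then show "a = b"
      using representation_scale_basis_vector[OF indE injE] a b s_nz[of a] by (auto split: if_splits)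
  qed
  have "?E \<subseteq> span ?F"
  proof
    fix x assume "x \<in> ?E"
    then obtain h where h: "h \<in> {1..n}" "x = e h" by auto
    have "x = sc (1 / s h) (?f h)" using h s_nz[of h] by (simp add: rescale_basis_def)
    moreover have "?f h \<in> ?F" using h(1) by (rule imageI)
    ultimately show "x \<in> span ?F" using span_scale span_base by metis
  qed
  then have spF: "span ?F = UNIV" using spE span_mono span_span by (metis top.extremum_uniqueI)
  interpret finite_dimensional_vector_space sc ?E
    by unfold_locales (use indE spE in blast)+
  have "dim (UNIV :: 'v set) = n"
    using dim_eq_card[of ?E UNIV] spE indE card_image[OF injE] by simp
  then have "independent ?F"
    using card_le_dim_spanning[of ?F UNIV] spF card_image[OF injF] by auto
  then show ?thesis unfolding is_basis_def using injF spF by auto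
qed

lemma coord_rescale_basis:
  assumes vs: "vector_space sc"
    and basis: "is_basis sc n e" and s_nz: "\<And>h. s h \<noteq> 0" and h: "h \<in> {1..n}"
  shows "coord sc n (rescale_basis sc s e) h u = coord sc n e h u / s h"
proof -
  interpret vector_space sc by (rule vs)
  let ?f = "rescale_basis sc s e"
  have basisF: "is_basis sc n ?f" by (rule is_basis_rescale_basis[OF vs basis s_nz])
  have "u = (\<Sum>k\<in>{1..n}. sc (coord sc n e k u) (e k))"
    using sum_coord_basis[OF vs basis] by simp
  also have "\<dots> = (\<Sum>k\<in>{1..n}. sc (coord sc n e k u / s k) (?f k))"
    by (intro sum.cong refl) (simp add: rescale_basis_def s_nz)
  finally have "coord sc n ?f h u = coord sc n ?f h (\<Sum>k\<in>{1..n}. sc (coord sc n e k u / s k) (?f k))"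
    by simp
  also have "\<dots> = coord sc n e h u / s h"
    using basisF representation_sum_basis[where e = ?f and S = "{1..n}" and k = h] h unfolding coord_def is_basis_def by simp
  finally show ?thesis .
qed

lemma lie_algebra_bracket_scale:
  assumes "lie_algebra sc br"
  shows "br (sc a x) (sc b y) = sc (a * b) (br x y)"
proof -
  interpret vector_space sc using assms unfolding lie_algebra_def by auto
  have "Vector_Spaces.linear sc sc (br (sc a x))" "Vector_Spaces.linear sc sc (\<lambda>x. br x y)"
    using assms unfolding lie_algebra_def by auto
  then show ?thesis unfolding Vector_Spaces.linear_iff by (simp add: mult.commute)
qed

definition tail_scale :: "complex \<Rightarrow> nat \<Rightarrow> complex" where
  "tail_scale c h = (if h = 1 then 1 else c)"

lemma tail_scale_nonzero: "c \<noteq> 0 \<Longrightarrow> tail_scale c h \<noteq> 0"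
  by (simp add: tail_scale_def)

lemma rescale_tail_ge2: "2 \<le> h \<Longrightarrow> rescale_basis sc (tail_scale c) e h = sc c (e h)"
  by (simp add: rescale_basis_def tail_scale_def)

lemma bracket_rescale_basis:
  assumes "lie_algebra sc br"
  shows "br (rescale_basis sc s e a) (rescale_basis sc s e b) = sc (s a * s b) (br (e a) (e b))"
  unfolding rescale_basis_def by (rule lie_algebra_bracket_scale[OF assms])

lemma bracket_rescale_tail:
  assumes "lie_algebra sc br" and "2 \<le> a" and "2 \<le> b"
  shows "br (rescale_basis sc (tail_scale c) e a) (rescale_basis sc (tail_scale c) e b) = sc (c * c) (br (e a) (e b))"
  using assms by (simp add: bracket_rescale_basis tail_scale_def)

lemma adapted_basis_rescale_tail:
  assumes lie: "lie_algebra sc br" and adapted: "adapted_basis sc br n e" and c: "c \<noteq> 0"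
  shows "adapted_basis sc br n (rescale_basis sc (tail_scale c) e)"
proof -
  have vs: "vector_space sc" using lie unfolding lie_algebra_def by auto
  interpret vector_space sc by (rule vs)
  let ?f = "rescale_basis sc (tail_scale c) e"
  have "is_basis sc n ?f"
    using adapted is_basis_rescale_basis[OF vs] tail_scale_nonzero[OF c] unfolding adapted_basis_def by blast
  moreover have "br (?f 1) (?f h) = ?f (h - 1)" if "3 \<le> h" "h \<le> n" for h
    using that adapted rescale_tail_ge2[of "h - 1" sc c e]
    unfolding adapted_basis_def by (simp add: bracket_rescale_basis[OF lie] tail_scale_def)
  moreover have "br (?f 2) (?f h) = 0" if "1 \<le> h" "h \<le> n" for h
    using that adapted unfolding adapted_basis_def by (simp add: bracket_rescale_basis[OF lie])
  moreover have "br (?f 3) (?f h) = 0" if "2 \<le> h" "h \<le> n" for h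
    using that adapted unfolding adapted_basis_def by (simp add: bracket_rescale_basis[OF lie])
  ultimately show ?thesis
    unfolding adapted_basis_def by auto
qed

lemma coord_rescale_tail:
  assumes vs: "vector_space sc" and basis: "is_basis sc n e" and c: "c \<noteq> 0" and h: "h \<in> {2..n}"
  shows "coord sc n (rescale_basis sc (tail_scale c) e) h (sc (c * c) u) = c * coord sc n e h u"
  using h c coord_rescale_basis[OF vs basis, where s = "tail_scale c" and h = h]
    tail_scale_nonzero[OF c] coord_scale[OF vs basis]
  by (simp add: tail_scale_def)

lemma law_z2_rescale_tail:
  assumes lie: "lie_algebra sc br" and basis: "is_basis sc n e"
    and law: "law_z2 sc br n e z1 \<alpha> \<gamma>1 \<beta>"
    and c: "c \<noteq> 0" and z1: "2 \<le> z1" "z1 < n"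
  shows "law_z2 sc br n (rescale_basis sc (tail_scale c) e) z1 (\<lambda>j. c * \<alpha> j) (c * \<gamma>1) (\<lambda>k. c * \<beta> k)"
proof -
  have vs: "vector_space sc" using lie unfolding lie_algebra_def by auto
  interpret vector_space sc by (rule vs)
  let ?f = "rescale_basis sc (tail_scale c) e"
  have f_ge2: "2 \<le> h \<Longrightarrow> ?f h = sc c (e h)" for h by (rule rescale_tail_ge2)
  have br_f: "2 \<le> a \<Longrightarrow> 2 \<le> b \<Longrightarrow> br (?f a) (?f b) = sc (c * c) (br (e a) (e b))" for a b
    by (rule bracket_rescale_tail[OF lie])
  show ?thesis
    unfolding law_z2_def
  proof (intro conjI allI impI)
    fix h assume h: "3 \<le> h \<and> h \<le> n"
    then have "?f (h - 1) = sc c (e (h - 1))" by (intro f_ge2) arith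
    then show "br (?f 1) (?f h) = ?f (h - 1)"
      using h law unfolding law_z2_def by (simp add: bracket_rescale_basis[OF lie] tail_scale_def)
  next
    fix i assume i: "i \<le> n - 2 - z1"
    have "br (?f (z1 + i)) (?f (n - 1)) = sc (c * c) (br (e (z1 + i)) (e (n - 1)))"
      using z1 by (intro br_f) auto
    also have "\<dots> = (\<Sum>j = 0..i. sc (c * \<alpha> (j + 1)) (?f (i + 2 - j)))"
      using law i unfolding law_z2_def by (simp add: scale_sum_right f_ge2 mult_ac)
    finally show "br (?f (z1 + i)) (?f (n - 1)) = (\<Sum>j = 0..i. sc (c * \<alpha> (j + 1)) (?f (i + 2 - j)))" .
  next
    have "br (?f z1) (?f n) = sc (c * c) (br (e z1) (e n))"
      using z1 by (intro br_f) auto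
    then show "br (?f z1) (?f n) = sc (c * \<alpha> 1) (?f 3) + sc (c * \<gamma>1) (?f 2)"
      using law unfolding law_z2_def by (simp add: f_ge2 scale_right_distrib mult_ac)
  next
    fix k assume k: "1 \<le> k \<and> k < n - z1"
    define X where "X = br (e (z1 + k - 1)) (e n) + br (e (z1 + k)) (e (n - 1))"
    have X_f: "br (?f (z1 + k - 1)) (?f n) + br (?f (z1 + k)) (?f (n - 1)) = sc (c * c) X"
    proof -
      have "2 \<le> z1 + k - 1" "2 \<le> n - 1" using k z1 by auto
      then show ?thesis using z1 by (simp add: br_f X_def scale_right_distrib)
    qed
    have term_f: "sc (coord sc n ?f h (sc (c * c) X)) (?f (h + 1)) = sc (c * c) (sc (coord sc n e h X) (e (h + 1)))"
      if "h \<in> {2..k + 2}" for h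
    proof -
      have "h \<in> {2..n}" using that k z1 by auto
      then show ?thesis using c by (simp add: coord_rescale_tail[OF vs basis] f_ge2 mult_ac)
    qed
    have "br (?f (z1 + k)) (?f n) = sc (c * c) (br (e (z1 + k)) (e n))"
      using z1 by (intro br_f) auto
    also have "\<dots> = sc (c * c) ((\<Sum>h = 2..k + 2. sc (coord sc n e h X) (e (h + 1))) + sc (\<beta> k) (e 2))"
      using law k unfolding law_z2_def X_def by simp
    also have "\<dots> = (\<Sum>h = 2..k + 2. sc (coord sc n ?f h (sc (c * c) X)) (?f (h + 1))) + sc (c * \<beta> k) (?f 2)"
    proof -
      have "sc (c * c) (\<Sum>h = 2..k + 2. sc (coord sc n e h X) (e (h + 1))) =
          (\<Sum>h = 2..k + 2. sc (coord sc n ?f h (sc (c * c) X)) (?f (h + 1)))"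
        unfolding scale_sum_right by (rule sum.cong[OF refl term_f[symmetric]])
      moreover have "sc (c * c) (sc (\<beta> k) (e 2)) = sc (c * \<beta> k) (?f 2)"
        by (simp add: f_ge2 mult_ac)
      ultimately show ?thesis by (simp only: scale_right_distrib)
    qed
    finally show "br (?f (z1 + k)) (?f n) =
        (\<Sum>h = 2..k + 2. sc (coord sc n ?f h (br (?f (z1 + k - 1)) (?f n) + br (?f (z1 + k)) (?f (n - 1))))
                           (?f (h + 1))) + sc (c * \<beta> k) (?f 2)"
      unfolding X_f .
  next
    fix a b assume "2 \<le> a \<and> a < b \<and> b \<le> n \<and>
        \<not> (b = n - 1 \<and> z1 \<le> a \<and> a \<le> n - 2) \<and> \<not> (b = n \<and> z1 \<le> a \<and> a < n)"
    then show "br (?f a) (?f b) = 0" using law br_f[of a b] unfolding law_z2_def by auto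
  qed
qed

lemma sum_atLeastAtMost_zero_prefix:
  fixes g :: "nat \<Rightarrow> 'a::comm_monoid_add"
  assumes "\<And>j. j < p \<Longrightarrow> g j = 0"
  shows "(\<Sum>j = 0..i. g j) = (\<Sum>j = p..i. g j)"
  by (rule sum.mono_neutral_right) (use assms in auto)

theorem mainTheorem7:
  fixes sc :: "complex \<Rightarrow> 'v::ab_group_add \<Rightarrow> 'v"
    and br :: "'v \<Rightarrow> 'v \<Rightarrow> 'v"
    and n z1 p :: nat
    and e :: "nat \<Rightarrow> 'v"
    and \<alpha> \<beta> :: "nat \<Rightarrow> complex" and \<gamma>1 :: complex
  assumes lie: "lie_algebra sc br"
    and fil: "filiform sc br n"
    and adapted: "adapted_basis sc br n e"
    and triple: "has_triple br n e z1 (n - 2)"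
    and z1_lt: "z1 < n - 2"
    and law: "law_z2 sc br n e z1 \<alpha> \<gamma>1 \<beta>"
    and p_def: "p = (n - z1 - 1) div 2"
    and known_alpha: "\<forall>j. 1 \<le> j \<and> j \<le> p \<longrightarrow> \<alpha> j = 0"
    and known_gamma: "\<gamma>1 \<noteq> 0"
  shows "\<exists>f. adapted_basis sc br n f \<and>
     (\<forall>h. 3 \<le> h \<and> h \<le> n \<longrightarrow> br (f 1) (f h) = f (h - 1)) \<and>
     br (f z1) (f n) = f 2 \<and>
     (\<forall>i. i < p \<longrightarrow> br (f (z1 + i)) (f (n - 1)) = 0) \<and>
     (\<forall>i. p \<le> i \<and> i \<le> n - 2 - z1 \<longrightarrow>
        br (f (z1 + i)) (f (n - 1)) = (\<Sum>j = p..i. sc (\<alpha> (j + 1) / \<gamma>1) (f (i + 2 - j)))) \<and>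
     (\<forall>k. 1 \<le> k \<and> k \<le> n - z1 - 1 \<longrightarrow>
        br (f (z1 + k)) (f n) =
          (\<Sum>h = 2..k + 2. sc (coord sc n f h (br (f (z1 + k - 1)) (f n) + br (f (z1 + k)) (f (n - 1))))
                              (f (h + 1))) + sc (\<beta> k / \<gamma>1) (f 2)) \<and>
     (\<forall>a b. 2 \<le> a \<and> a < b \<and> b \<le> n \<and>
        \<not> (b = n - 1 \<and> z1 \<le> a \<and> a \<le> n - 2) \<and> \<not> (b = n \<and> z1 \<le> a \<and> a < n) \<longrightarrow>
        br (f a) (f b) = 0)"
proof -
  interpret vector_space sc using lie unfolding lie_algebra_def by auto
  define f where "f = rescale_basis sc (tail_scale (1 / \<gamma>1)) e"
  have c: "1 / \<gamma>1 \<noteq> 0" using known_gamma by simp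
  have z1: "4 \<le> z1" "z1 + 3 \<le> n" using triple z1_lt unfolding has_triple_def by auto
  have p: "1 \<le> p" "p \<le> n - 2 - z1" using p_def z1 by auto
  have adapted_f: "adapted_basis sc br n f"
    unfolding f_def by (rule adapted_basis_rescale_tail[OF lie adapted c])
  have law_f: "law_z2 sc br n f z1 (\<lambda>j. 1 / \<gamma>1 * \<alpha> j) (1 / \<gamma>1 * \<gamma>1) (\<lambda>k. 1 / \<gamma>1 * \<beta> k)"
    unfolding f_def using adapted z1 unfolding adapted_basis_def
    by (intro law_z2_rescale_tail[OF lie _ law c]) auto
  then have F2: "\<And>i. i \<le> n - 2 - z1 \<Longrightarrow>
        br (f (z1 + i)) (f (n - 1)) = (\<Sum>j = 0..i. sc (\<alpha> (j + 1) / \<gamma>1) (f (i + 2 - j)))"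
    and F3: "br (f z1) (f n) = sc (\<alpha> 1 / \<gamma>1) (f 3) + f 2"
    unfolding law_z2_def using known_gamma by auto
  have vanishing_prefix: "sc (\<alpha> (j + 1) / \<gamma>1) (f (i + 2 - j)) = 0" if "j < p" for i j
    using that known_alpha by simp
  show ?thesis
  proof (intro exI[of _ f] conjI allI impI adapted_f)
    show "br (f z1) (f n) = f 2" using F3 known_alpha p by simp
  next
    fix i assume "i < p"
    then show "br (f (z1 + i)) (f (n - 1)) = 0"
      using F2[of i] p vanishing_prefix by (simp add: sum.neutral)
  next
    fix i assume "p \<le> i \<and> i \<le> n - 2 - z1"
    then show "br (f (z1 + i)) (f (n - 1)) = (\<Sum>j = p..i. sc (\<alpha> (j + 1) / \<gamma>1) (f (i + 2 - j)))"
      using F2[of i] sum_atLeastAtMost_zero_prefix[of p, OF vanishing_prefix] by simp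
  qed (use law_f in \<open>auto simp: law_z2_def\<close>)
qed

end
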